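(* Let $a,b$ be integers and let $G\in\mathscr{G}_{a,b}$ be a graph containing a cycle and having at least one pendant vertex. If $v_0v_1\ldots v_k$ is a longest pendant path in $G$, then $k=1$.
   Context: All graphs are simple and connected; $d_G(v)$ is the degree of $v$, $N_G(v)$ its neighbourhood. For integers $a,b$, $\mathscr{G}_{a,b}$ is the set of connected graphs $G$ such that for every $v\in V_G$, $\sum_{u\in N_G(v)}d_G(u)=a\,d_G(v)+b-d_G(v)^2$. A pendant vertex is a vertex of degree $1$; $PV(G)$ is the set of pendant vertices. The base $\widetilde{G}$ of $G$ is the subgraph obtained from $G$ by repeatedly deleting pendant vertices until none remain. If $G$ contains a cycle and $PV(G)\neq\emptyset$, a longest pendant path is a longest path $v_0v_1\ldots v_k$ with $v_0\in PV(G)$, $v_i\notin V_{\widetilde G}$ for $1\le i\le k-1$, and $v_k\in V_{\widetilde G}$. *)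

theory Defs
  imports Main
begin

definition simple_graph :: "'a set \<Rightarrow> ('a \<Rightarrow> 'a \<Rightarrow> bool) \<Rightarrow> bool" where
  "simple_graph V E \<longleftrightarrow> finite V \<and> (\<forall>u v. E u v \<longrightarrow> E v u) \<and> (\<forall>v. \<not> E v v)
     \<and> (\<forall>u v. E u v \<longrightarrow> u \<in> V \<and> v \<in> V)"

definition connected_graph :: "'a set \<Rightarrow> ('a \<Rightarrow> 'a \<Rightarrow> bool) \<Rightarrow> bool" where
  "connected_graph V E \<longleftrightarrow> V \<noteq> {} \<and> (\<forall>u\<in>V. \<forall>v\<in>V. E\<^sup>*\<^sup>* u v)"

definition nbhd :: "'a set \<Rightarrow> ('a \<Rightarrow> 'a \<Rightarrow> bool) \<Rightarrow> 'a \<Rightarrow> 'a set" where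
  "nbhd V E v = {u\<in>V. E v u}"

definition deg :: "'a set \<Rightarrow> ('a \<Rightarrow> 'a \<Rightarrow> bool) \<Rightarrow> 'a \<Rightarrow> nat" where
  "deg V E v = card (nbhd V E v)"

definition in_Gab :: "int \<Rightarrow> int \<Rightarrow> 'a set \<Rightarrow> ('a \<Rightarrow> 'a \<Rightarrow> bool) \<Rightarrow> bool" where
  "in_Gab a b V E \<longleftrightarrow> simple_graph V E \<and> connected_graph V E \<and>
     (\<forall>v\<in>V. (\<Sum>u\<in>nbhd V E v. int (deg V E u)) = a * int (deg V E v) + b - int (deg V E v)^2)"

definition pendant_vertices :: "'a set \<Rightarrow> ('a \<Rightarrow> 'a \<Rightarrow> bool) \<Rightarrow> 'a set" where
  "pendant_vertices V E = {v\<in>V. deg V E v = 1}"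

definition is_path :: "'a set \<Rightarrow> ('a \<Rightarrow> 'a \<Rightarrow> bool) \<Rightarrow> 'a list \<Rightarrow> bool" where
  "is_path V E p \<longleftrightarrow> p \<noteq> [] \<and> distinct p \<and> set p \<subseteq> V \<and>
     (\<forall>i. Suc i < length p \<longrightarrow> E (p ! i) (p ! Suc i))"

definition has_cycle :: "'a set \<Rightarrow> ('a \<Rightarrow> 'a \<Rightarrow> bool) \<Rightarrow> bool" where
  "has_cycle V E \<longleftrightarrow> (\<exists>c. is_path V E c \<and> length c \<ge> 3 \<and> E (last c) (hd c))"

definition prune :: "('a \<Rightarrow> 'a \<Rightarrow> bool) \<Rightarrow> 'a set \<Rightarrow> 'a set" where
  "prune E S = {v\<in>S. deg S E v \<noteq> 1}"

text \<open>The base: iterate pruning until stable (|V| rounds suffice, as each non-stable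
  round removes at least one vertex).\<close>
definition base :: "'a set \<Rightarrow> ('a \<Rightarrow> 'a \<Rightarrow> bool) \<Rightarrow> 'a set" where
  "base V E = (prune E ^^ card V) V"

text \<open>Pendant path v_0 ... v_k (as the list [v_0,...,v_k]).\<close>
definition pendant_path :: "'a set \<Rightarrow> ('a \<Rightarrow> 'a \<Rightarrow> bool) \<Rightarrow> 'a list \<Rightarrow> bool" where
  "pendant_path V E p \<longleftrightarrow> is_path V E p \<and> hd p \<in> pendant_vertices V E \<and>
     last p \<in> base V E \<and> (\<forall>i. 1 \<le> i \<and> i < length p - 1 \<longrightarrow> p ! i \<notin> base V E)"

definition longest_pendant_path :: "'a set \<Rightarrow> ('a \<Rightarrow> 'a \<Rightarrow> bool) \<Rightarrow> 'a list \<Rightarrow> bool" where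
  "longest_pendant_path V E p \<longleftrightarrow> pendant_path V E p \<and>
     (\<forall>q. pendant_path V E q \<longrightarrow> length q \<le> length p)"

end

theory Submission
  imports Defs
begin

(* If a pendant path had length at least two, its second vertex would lie outside the base
   with degree at least two. Let x be such a vertex deleted by the earliest pruning round:
   at that moment x has a single surviving neighbour y, and its other neighbours, deleted
   earlier and of degree below two, are pendant. In G_{a,b} a pendant neighbour of x forces
   d(x) = a + b - 1, and the degree equations at x and y then force every neighbour of y
   other than x to be pendant too. By connectivity G is a double star on the edge xy, which
   has no cycle. *)

lemma sum_le_card_iff_all_1:
  fixes f :: "'a \<Rightarrow> int"
  assumes "finite A" and "\<forall>u\<in>A. 1 \<le> f u"
  shows "sum f A \<le> int (card A) \<longleftrightarrow> (\<forall>u\<in>A. f u = 1)"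
proof
  assume "sum f A \<le> int (card A)"
  then have "(\<Sum>u\<in>A. f u - 1) \<le> 0"
    by (simp add: sum_subtractf)
  moreover have nonneg: "\<forall>u\<in>A. 0 \<le> f u - 1"
    using assms(2) by auto
  ultimately have "(\<Sum>u\<in>A. f u - 1) = 0"
    by (meson order.antisym sum_nonneg)
  then show "\<forall>u\<in>A. f u = 1"
    using nonneg by (simp add: sum_nonneg_eq_0_iff[OF assms(1)])
qed simp

lemma funpow_prune_subset: "(prune E ^^ j) S \<subseteq> S"
  by (induction j) (auto simp: prune_def)

lemma funpow_prune_antimono:
  assumes "j \<le> m"
  shows "(prune E ^^ m) S \<subseteq> (prune E ^^ j) S"
proof -
  obtain k where "m = k + j"
    using assms by (metis add.commute le_iff_add)
  then show ?thesis
    using funpow_prune_subset[where j = k and S = "(prune E ^^ j) S"] by (simp add: funpow_add)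
qed

lemma base_subset_funpow_prune: "j \<le> card V \<Longrightarrow> base V E \<subseteq> (prune E ^^ j) V"
  unfolding base_def by (rule funpow_prune_antimono)

lemma Gab_arith_bound:
  fixes a b D d :: int
  assumes "D = a + b - 1" and "d + D - 1 = a * D + b - D\<^sup>2" and "1 \<le> D" and "1 \<le> d"
  shows "a * d + b - d\<^sup>2 \<le> D + d - 1"
proof -
  \<comment> \<open>The hypotheses say \<open>d - 1 = X * Y\<close>, and the claim becomes \<open>(d - 1) * (X - 1) * (Y - 1) \<ge> 0\<close>.\<close>
  define X Y where "X = D - 1" and "Y = a - 1 - D"
  have b: "b = D + 1 - a"
    using assms(1) by simp
  have d: "d - 1 = X * Y"
    using assms(2) unfolding X_def Y_def b by (simp add: algebra_simps power2_eq_square)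
  have "(d - 1) * (a - d - 2) \<le> 0"
  proof (cases "d = 1")
    case False
    then have "1 \<le> X * Y"
      using d assms(4) by simp
    moreover have "0 \<le> X"
      using assms(3) X_def by simp
    ultimately have "0 < X" and "0 < Y"
      using zero_less_mult_iff[of X Y] by auto
    then have "1 \<le> X" and "1 \<le> Y"
      by simp_all
    moreover have "a - d - 2 = - ((X - 1) * (Y - 1))"
      using d unfolding X_def Y_def by (simp add: algebra_simps)
    ultimately show ?thesis
      using assms(4) by (simp add: mult_nonneg_nonpos)
  qed simp
  moreover have "a * d + b - d\<^sup>2 - (D + d - 1) = (d - 1) * (a - d - 2)"
    unfolding b by (simp add: algebra_simps power2_eq_square)
  ultimately show ?thesis
    by simp
qed

locale finite_simple_graph =
  fixes V :: "'a set" and E :: "'a \<Rightarrow> 'a \<Rightarrow> bool"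
  assumes simple: "simple_graph V E"
begin

lemma finite_vertices: "finite V"
  using simple by (simp add: simple_graph_def)

lemma adjacent_sym: "E u v \<Longrightarrow> E v u"
  using simple by (simp add: simple_graph_def)

lemma adjacent_in_vertices: "E u v \<Longrightarrow> u \<in> V \<and> v \<in> V"
  using simple by (simp add: simple_graph_def)

lemma in_nbhd_iff: "u \<in> nbhd V E v \<longleftrightarrow> E v u"
  using adjacent_in_vertices by (auto simp: nbhd_def)

lemma finite_nbhd: "finite (nbhd V E v)"
  using finite_vertices by (simp add: nbhd_def)

lemma deg_ge_1: "E v u \<Longrightarrow> 1 \<le> deg V E v"
  using finite_nbhd[of v] in_nbhd_iff[of u v] unfolding deg_def
  by (simp add: Suc_le_eq card_gt_0_iff) blast

lemma deg_ge_2: "E v u \<Longrightarrow> E v w \<Longrightarrow> u \<noteq> w \<Longrightarrow> 2 \<le> deg V E v"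
proof -
  assume "E v u" "E v w" "u \<noteq> w"
  then have "{u, w} \<subseteq> nbhd V E v"
    by (simp add: in_nbhd_iff)
  then have "card {u, w} \<le> deg V E v"
    unfolding deg_def using finite_nbhd by (rule card_mono[rotated])
  with \<open>u \<noteq> w\<close> show ?thesis
    by simp
qed

lemma card_nbhd_remove: "E x y \<Longrightarrow> card (nbhd V E x - {y}) = deg V E x - 1"
  by (simp add: deg_def finite_nbhd in_nbhd_iff)

lemma nbhd_pendant: "w \<in> pendant_vertices V E \<Longrightarrow> E w x \<Longrightarrow> nbhd V E w = {x}"
  using in_nbhd_iff[of x w]
  by (auto simp: pendant_vertices_def deg_def card_1_singleton_iff)

lemma pendant_not_in_base: "v \<in> pendant_vertices V E \<Longrightarrow> v \<notin> base V E"
proof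
  assume v: "v \<in> pendant_vertices V E" and "v \<in> base V E"
  have "1 \<le> card V"
    using v finite_vertices by (auto simp: pendant_vertices_def Suc_le_eq card_gt_0_iff)
  then have "v \<in> prune E V"
    using base_subset_funpow_prune[of 1 V E] \<open>v \<in> base V E\<close> by auto
  with v show False
    by (simp add: prune_def pendant_vertices_def)
qed

lemma deg_ge_2_on_cycle:
  assumes c: "is_path V E c" "3 \<le> length c" "E (last c) (hd c)" and "v \<in> set c"
  shows "2 \<le> deg V E v"
proof -
  define n where "n = length c"
  have step: "E (c ! i) (c ! (Suc i mod n))" if "i < n" for i
  proof (cases "Suc i < n")
    case True
    then show ?thesis
      using c(1) by (simp add: is_path_def n_def)
  next
    case False
    with that have "Suc i = n"
      by simp
    then have "i = n - 1" "Suc i mod n = 0"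
      by simp_all
    moreover have "c \<noteq> []"
      using c(2) by auto
    ultimately have "c ! i = last c" "c ! (Suc i mod n) = hd c"
      by (simp_all add: n_def last_conv_nth hd_conv_nth)
    then show ?thesis
      using c(3) by simp
  qed
  obtain i where i: "i < n" "v = c ! i"
    using \<open>v \<in> set c\<close> by (auto simp: in_set_conv_nth n_def)
  define k where "k = (if i = 0 then n - 1 else i - 1)"
  have k: "k < n" "Suc k mod n = i"
    using i c(2) by (auto simp: k_def n_def)
  have "Suc i mod n \<noteq> k"
    using i c(2) by (cases "Suc i = n") (auto simp: k_def n_def)
  moreover have "Suc i mod n < n"
    using i(1) by simp
  ultimately have "c ! (Suc i mod n) \<noteq> c ! k"
    using c(1) k(1) by (simp add: is_path_def nth_eq_iff_index_eq n_def)
  moreover have "E v (c ! (Suc i mod n))"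
    using step[OF i(1)] i(2) by simp
  moreover have "E v (c ! k)"
    using adjacent_sym[OF step[OF k(1)]] i(2) k(2) by simp
  ultimately show ?thesis
    using deg_ge_2 by blast
qed

lemma not_has_cycle_if_pendant_outside:
  assumes "V - {x, y} \<subseteq> pendant_vertices V E"
  shows "\<not> has_cycle V E"
proof
  assume "has_cycle V E"
  then obtain c where c: "is_path V E c" "3 \<le> length c" "E (last c) (hd c)"
    unfolding has_cycle_def by blast
  have "set c \<subseteq> {x, y}"
  proof
    fix v
    assume "v \<in> set c"
    then have "v \<in> V" "2 \<le> deg V E v"
      using c deg_ge_2_on_cycle by (auto simp: is_path_def)
    with assms show "v \<in> {x, y}"
      by (force simp: pendant_vertices_def)
  qed
  then have "card (set c) \<le> card {x, y}"
    by (simp add: card_mono)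
  also have "\<dots> \<le> 2"
    by (simp add: card_insert_if)
  moreover have "card (set c) = length c"
    using c(1) by (simp add: is_path_def distinct_card)
  ultimately show False
    using c(2) by simp
qed

lemma pendant_outside_edge:
  assumes "connected_graph V E" and "E x y"
    and "nbhd V E x - {y} \<subseteq> pendant_vertices V E"
    and "nbhd V E y - {x} \<subseteq> pendant_vertices V E"
  shows "V - {x, y} \<subseteq> pendant_vertices V E"
proof -
  define C where "C = {x, y} \<union> nbhd V E x \<union> nbhd V E y"
  have closed: "u \<in> C" if "v \<in> C" and "E v u" for v u
  proof (cases "v \<in> {x, y}")
    case True
    with that(2) show ?thesis
      by (auto simp: C_def in_nbhd_iff)
  next
    case False
    with that(1) assms(3,4) have "v \<in> pendant_vertices V E" and "E x v \<or> E y v"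
      by (auto simp: C_def in_nbhd_iff)
    then have "nbhd V E v = {x} \<or> nbhd V E v = {y}"
      using nbhd_pendant adjacent_sym by blast
    with that(2) show ?thesis
      by (auto simp: C_def in_nbhd_iff[symmetric])
  qed
  have "v \<in> C" if "E\<^sup>*\<^sup>* x v" for v
    using that
  proof induction
    case (step w z)
    then show ?case
      using closed by blast
  qed (simp add: C_def)
  then have "V \<subseteq> C"
    using assms(1,2) adjacent_in_vertices by (auto simp: connected_graph_def)
  with assms(3,4) show ?thesis
    by (auto simp: C_def)
qed

lemma pendant_path_length_ge_2:
  assumes "pendant_path V E p"
  shows "2 \<le> length p"
proof -
  have "p \<noteq> []" and "hd p \<noteq> last p"
    using assms pendant_not_in_base by (auto simp: pendant_path_def is_path_def)
  then show ?thesis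
    by (cases p) (auto simp: Suc_le_eq split: if_splits)
qed

lemma pendant_path_second_vertex:
  assumes "pendant_path V E p" and "3 \<le> length p"
  shows "p ! 1 \<in> V - base V E" and "2 \<le> deg V E (p ! 1)"
proof -
  have path: "is_path V E p"
    using assms(1) by (simp add: pendant_path_def)
  then have "E (p ! 0) (p ! 1)" and "E (p ! 1) (p ! 2)"
    using assms(2) by (auto simp: is_path_def numeral_2_eq_2)
  moreover have "p ! 0 \<noteq> p ! 2"
    using path assms(2) by (simp add: is_path_def nth_eq_iff_index_eq)
  ultimately show "2 \<le> deg V E (p ! 1)"
    using deg_ge_2 adjacent_sym by blast
  show "p ! 1 \<in> V - base V E"
    using assms path by (auto simp: pendant_path_def is_path_def)
qed

lemma pendant_neighbours_of_pruned_vertex: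
  assumes "j \<le> card V"
    and high_deg: "{v \<in> V - base V E. 2 \<le> deg V E v} \<subseteq> (prune E ^^ j) V"
    and x: "x \<in> (prune E ^^ j) V" "x \<notin> (prune E ^^ Suc j) V" "2 \<le> deg V E x"
  shows "\<exists>y. E x y \<and> nbhd V E x - {y} \<noteq> {} \<and> nbhd V E x - {y} \<subseteq> pendant_vertices V E"
proof -
  let ?S = "(prune E ^^ j) V"
  have "deg ?S E x = 1"
    using x(1,2) by (simp add: prune_def)
  then obtain y where y: "nbhd ?S E x = {y}"
    by (auto simp: deg_def card_1_singleton_iff)
  then have "E x y"
    by (auto simp: nbhd_def)
  have "w \<in> pendant_vertices V E" if w: "w \<in> nbhd V E x - {y}" for w
  proof -
    have "E x w" and "w \<in> V"
      using w adjacent_in_vertices by (auto simp: in_nbhd_iff)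
    have "w \<notin> ?S"
      using w y by (auto simp: nbhd_def)
    moreover have "base V E \<subseteq> ?S"
      using assms(1) by (rule base_subset_funpow_prune)
    ultimately have "\<not> 2 \<le> deg V E w"
      using high_deg \<open>w \<in> V\<close> by blast
    moreover have "1 \<le> deg V E w"
      using deg_ge_1 adjacent_sym[OF \<open>E x w\<close>] .
    ultimately show ?thesis
      using \<open>w \<in> V\<close> by (simp add: pendant_vertices_def)
  qed
  moreover have "nbhd V E x - {y} \<noteq> {}"
    using card_nbhd_remove[OF \<open>E x y\<close>] x(3) by force
  ultimately show ?thesis
    using \<open>E x y\<close> by blast
qed

lemma ex_vertex_with_pendant_neighbours_but_one:
  assumes "v \<in> V - base V E" and "2 \<le> deg V E v"
  shows "\<exists>x y. E x y \<and> nbhd V E x - {y} \<noteq> {} \<and> nbhd V E x - {y} \<subseteq> pendant_vertices V E"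
proof (rule ccontr)
  assume none: "\<not> ?thesis"
  let ?T = "{v \<in> V - base V E. 2 \<le> deg V E v}"
  have "?T \<subseteq> (prune E ^^ j) V" if "j \<le> card V" for j
    using that
  proof (induction j)
    case (Suc j)
    then have T: "?T \<subseteq> (prune E ^^ j) V"
      by simp
    have "x \<in> (prune E ^^ Suc j) V" if "x \<in> ?T" for x
    proof (rule ccontr)
      assume "x \<notin> (prune E ^^ Suc j) V"
      moreover have "x \<in> (prune E ^^ j) V"
        using T that by blast
      ultimately show False
        using pendant_neighbours_of_pruned_vertex[of j x] Suc.prems T that none by auto
    qed
    then show ?case
      by blast
  qed auto
  from this[of "card V"] assms show False
    by (auto simp: base_def)
qed

end

locale Gab_graph =
  fixes a b :: int and V :: "'a set" and E :: "'a \<Rightarrow> 'a \<Rightarrow> bool"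
  assumes in_Gab: "in_Gab a b V E"

sublocale Gab_graph \<subseteq> finite_simple_graph V E
  using in_Gab by unfold_locales (simp add: in_Gab_def)

context Gab_graph
begin

lemma connected: "connected_graph V E"
  using in_Gab by (simp add: in_Gab_def)

lemma sum_deg_nbhd:
  "v \<in> V \<Longrightarrow> (\<Sum>u\<in>nbhd V E v. int (deg V E u)) = a * int (deg V E v) + b - int (deg V E v) ^ 2"
  using in_Gab by (simp add: in_Gab_def)

lemma deg_neighbour_of_pendant:
  assumes "w \<in> pendant_vertices V E" and "E w x"
  shows "int (deg V E x) = a + b - 1"
  using sum_deg_nbhd[of w] assms nbhd_pendant[OF assms] by (simp add: pendant_vertices_def)

lemma pendant_neighbours_other_end:
  assumes "E x y"
    and "nbhd V E x - {y} \<noteq> {}" and "nbhd V E x - {y} \<subseteq> pendant_vertices V E"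
  shows "nbhd V E y - {x} \<subseteq> pendant_vertices V E"
proof -
  define D d where "D = int (deg V E x)" and "d = int (deg V E y)"
  have "x \<in> V" "y \<in> V"
    using adjacent_in_vertices[OF assms(1)] by auto
  have "y \<in> nbhd V E x" and "x \<in> nbhd V E y"
    using assms(1) adjacent_sym by (auto simp: in_nbhd_iff)
  have "1 \<le> D" and "1 \<le> d"
    using deg_ge_1 assms(1) adjacent_sym unfolding D_def d_def by force+
  obtain w where "w \<in> nbhd V E x - {y}"
    using assms(2) by blast
  with assms(3) have "w \<in> pendant_vertices V E" and "E w x"
    using adjacent_sym by (auto simp: in_nbhd_iff)
  then have "D = a + b - 1"
    unfolding D_def by (rule deg_neighbour_of_pendant)
  have "(\<Sum>u\<in>nbhd V E x - {y}. int (deg V E u)) = D - 1"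
    using assms(3) card_nbhd_remove[OF assms(1)] \<open>1 \<le> D\<close> unfolding D_def
    by (simp add: pendant_vertices_def subset_iff)
  then have "d + D - 1 = (\<Sum>u\<in>nbhd V E x. int (deg V E u))"
    using sum.remove[OF finite_nbhd \<open>y \<in> nbhd V E x\<close>, of "\<lambda>u. int (deg V E u)"]
    unfolding d_def by simp
  also have "\<dots> = a * D + b - D\<^sup>2"
    using sum_deg_nbhd[OF \<open>x \<in> V\<close>] unfolding D_def by simp
  finally have "a * d + b - d\<^sup>2 \<le> D + d - 1"
    using Gab_arith_bound \<open>D = a + b - 1\<close> \<open>1 \<le> D\<close> \<open>1 \<le> d\<close> by blast
  moreover have "a * d + b - d\<^sup>2 = D + (\<Sum>u\<in>nbhd V E y - {x}. int (deg V E u))"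
    using sum_deg_nbhd[OF \<open>y \<in> V\<close>]
      sum.remove[OF finite_nbhd \<open>x \<in> nbhd V E y\<close>, of "\<lambda>u. int (deg V E u)"]
    unfolding D_def d_def by simp
  moreover have "int (card (nbhd V E y - {x})) = d - 1"
    using card_nbhd_remove[OF adjacent_sym[OF assms(1)]] \<open>1 \<le> d\<close> unfolding d_def by simp
  ultimately have "(\<Sum>u\<in>nbhd V E y - {x}. int (deg V E u)) \<le> int (card (nbhd V E y - {x}))"
    by simp
  moreover have "\<forall>u\<in>nbhd V E y - {x}. 1 \<le> int (deg V E u)"
    using deg_ge_1 adjacent_sym by (force simp: in_nbhd_iff)
  ultimately have "\<forall>u\<in>nbhd V E y - {x}. int (deg V E u) = 1"
    using sum_le_card_iff_all_1[of "nbhd V E y - {x}" "\<lambda>u. int (deg V E u)"] finite_nbhd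
    by simp
  then show ?thesis
    by (auto simp: pendant_vertices_def nbhd_def)
qed

lemma pendant_path_length:
  assumes "has_cycle V E" and p: "pendant_path V E p"
  shows "length p = 2"
proof -
  have "\<not> 3 \<le> length p"
  proof
    assume "3 \<le> length p"
    then obtain x y where "E x y" "nbhd V E x - {y} \<noteq> {}"
      and "nbhd V E x - {y} \<subseteq> pendant_vertices V E"
      using ex_vertex_with_pendant_neighbours_but_one pendant_path_second_vertex[OF p] by blast
    then have "V - {x, y} \<subseteq> pendant_vertices V E"
      using pendant_outside_edge connected pendant_neighbours_other_end by blast
    then show False
      using not_has_cycle_if_pendant_outside assms(1) by blast
  qed
  with pendant_path_length_ge_2[OF p] show ?thesis
    by simp
qed

end

(* Every pendant path has length one. *)
theorem lemma1p7:
  fixes a b :: int and V :: "'a set" and E :: "'a \<Rightarrow> 'a \<Rightarrow> bool" and p :: "'a list"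
  assumes "in_Gab a b V E"
    and "has_cycle V E"
    and "pendant_vertices V E \<noteq> {}"
    and "longest_pendant_path V E p"
  shows "length p - 1 = 1"
proof -
  interpret Gab_graph a b V E
    using assms(1) by unfold_locales
  have "pendant_path V E p"
    using assms(4) by (simp add: longest_pendant_path_def)
  with assms(2) show ?thesis
    by (simp add: pendant_path_length)
qed

end
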